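(* Let $\pi\colon U\to\mathbf{DT}$ be a type specification and $f\colon Y\to X$ a morphism of schemas of type $\pi$. The pullback functor $f^*\colon\mathbf{DB}_X\to\mathbf{DB}_Y$ and the push-forward functor $f_+\colon\mathbf{DB}_Y\to\mathbf{DB}_X$ form an adjunction with $f^*$ left adjoint to $f_+$.
   Context: A type specification is a function of sets $\pi\colon U\to\mathbf{DT}$. A simple schema is a pair $(C,\sigma)$, $C$ a finite (possibly empty) totally ordered set, $\sigma\colon C\to\mathbf{DT}$; morphisms are order-preserving $f\colon C\to C'$ with $\sigma'\circ f=\sigma$; this is the category $\mathcal{S}$. Records: $\Gamma(\sigma)=\{r\colon C\to U\mid\pi(r(c))=\sigma(c)\ \forall c\}$; a morphism $f\colon\sigma_2\to\sigma_1$ induces $r\mapsto r\circ f$, $\Gamma(\sigma_1)\to\Gamma(\sigma_2)$, making $\Gamma^\pi\colon\mathcal{S}^{op}\to\mathbf{Sets}$ a functor. A schema is a functor $X\colon\mathcal{S}^{op}\to\mathbf{Sets}$, morphisms are natural transformations. $\mathbf{Sub}(X)$ is the poset of subfunctors of $X$ (colimits are smallest containing subschemas). A sheaf on $X$ is a functor $\mathcal{K}\colon\mathbf{Sub}(X)^{op}\to\mathbf{Sets}$ with $\mathcal{K}(\mathrm{colim}\,D)\to\lim\mathcal{K}\circ D$ bijective for every diagram $D$ in $\mathbf{Sub}(X)$; $\mathbf{Shv}(X)$ denotes sheaves and natural transformations. The universal sheaf is $\mathcal{U}_X(X')=\mathrm{Hom}(X',\Gamma^\pi)$ with restriction by precomposition.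 For $f\colon Y\to X$: $f^*\mathcal{K}(Y')=\mathcal{K}(f(Y'))$ ($f(Y')$ the image) for $\mathcal{K}\in\mathbf{Shv}(X)$; $f_*\mathcal{L}(X')=\mathcal{L}(f^{-1}(X'))$ for $\mathcal{L}\in\mathbf{Shv}(Y)$; $f^*\dashv f_*$; and $\mathcal{U}_f\colon f^*\mathcal{U}_X\to\mathcal{U}_Y$ sends $h\colon f(Y')\to\Gamma^\pi$ to $h\circ f|_{Y'}$. A database on $X$ is a triple $(X,\mathcal{K},\tau)$ with $\mathcal{K}\in\mathbf{Shv}(X)$ and $\tau\colon\mathcal{K}\to\mathcal{U}_X$; $\mathbf{DB}_X$ is the category of databases on $X$ whose morphisms $(X,\mathcal{K},\tau)\to(X,\mathcal{K}',\tau')$ are morphisms of sheaves $\alpha\colon\mathcal{K}\to\mathcal{K}'$ with $\tau'\circ\alpha=\tau$. The pullback: $f^*(X,\mathcal{K}_X,\tau_X)=(Y,f^*\mathcal{K}_X,\mathcal{U}_f\circ f^*\tau_X)$. The push-forward: for $(Y,\mathcal{K}_Y,\tau_Y)$, let $f_+\mathcal{K}_Y$ be the fiber product (in $\mathbf{Shv}(X)$) of $\mathcal{U}_X\to f_*\mathcal{U}_Y\leftarrow f_*\mathcal{K}_Y$, where the first map is the adjoint of $\mathcal{U}_f$ and the second is $f_*\tau_Y$; let $f_+\tau_Y\colon f_+\mathcal{K}_Y\to\mathcal{U}_X$ be the projection; then $f_+(Y,\mathcal{K}_Y,\tau_Y)=(X,f_+\mathcal{K}_Y,f_+\tau_Y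)$.
   Formalization: Sheaves satisfy the limit condition only for diagrams given by downward-closed families of subschemas, and $f^*$ is not claimed to land in sheaves, the adjunction being a natural hom-set bijection with presheaf-valued pullbacks. The statement above fails without it. *)

theory Defs
  imports Main "HOL-Library.FuncSet"
begin

(* Simple schemas: skeleton of S. An object (C,sigma) with C = {0..<n} is the list
   [sigma 0, ..., sigma (n-1)]. A morphism s -> s' is the order-preserving map
   i |-> fl!i, given as a list fl, with sigma' o f = sigma. *)
definition smor :: "'d list \<Rightarrow> 'd list \<Rightarrow> nat list \<Rightarrow> bool" where
  "smor s s' fl \<longleftrightarrow> sorted fl \<and> (\<forall>i\<in>set fl. i < length s') \<and> map ((!) s') fl = s"

(* A schema X : S^op -> Sets: sets ob X s, and for fl : s -> s' the map
   act X s' fl : ob X s' -> ob X s. *)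
type_synonym ('d,'x) schema = "('d list \<Rightarrow> 'x set) \<times> ('d list \<Rightarrow> nat list \<Rightarrow> 'x \<Rightarrow> 'x)"

definition ob :: "('d,'x) schema \<Rightarrow> 'd list \<Rightarrow> 'x set" where "ob X = fst X"
definition act :: "('d,'x) schema \<Rightarrow> 'd list \<Rightarrow> nat list \<Rightarrow> 'x \<Rightarrow> 'x" where "act X = snd X"

definition is_schema :: "('d,'x) schema \<Rightarrow> bool" where
  "is_schema X \<longleftrightarrow>
     (\<forall>s s' fl x. smor s s' fl \<longrightarrow> x \<in> ob X s' \<longrightarrow> act X s' fl x \<in> ob X s) \<and>
     (\<forall>s x. x \<in> ob X s \<longrightarrow> act X s [0..<length s] x = x) \<and>
     (\<forall>s s' s'' fl gl x. smor s s' fl \<longrightarrow> smor s' s'' gl \<longrightarrow> x \<in> ob X s'' \<longrightarrow>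
          act X s' fl (act X s'' gl x) = act X s'' (map ((!) gl) fl) x)"

definition Gamma :: "('u \<Rightarrow> 'd) \<Rightarrow> ('d, 'u list) schema" where
  "Gamma \<pi> = (\<lambda>s. {r. map \<pi> r = s}, \<lambda>s' fl r. map ((!) r) fl)"

definition nat_on :: "('d,'x) schema \<Rightarrow> ('d list \<Rightarrow> 'x set) \<Rightarrow> ('d,'z) schema
                      \<Rightarrow> ('d list \<Rightarrow> 'x \<Rightarrow> 'z) \<Rightarrow> bool" where
  "nat_on X A Z h \<longleftrightarrow> (\<forall>s x. x \<in> A s \<longrightarrow> h s x \<in> ob Z s) \<and>
     (\<forall>s s' fl x. smor s s' fl \<longrightarrow> x \<in> A s' \<longrightarrow> h s (act X s' fl x) = act Z s' fl (h s' x))"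

definition schema_hom :: "('d,'y) schema \<Rightarrow> ('d,'x) schema \<Rightarrow> ('d list \<Rightarrow> 'y \<Rightarrow> 'x) \<Rightarrow> bool" where
  "schema_hom Y X f \<longleftrightarrow> nat_on Y (ob Y) X f"

definition subs :: "('d,'x) schema \<Rightarrow> ('d list \<Rightarrow> 'x set) set" where
  "subs X = {A. (\<forall>s. A s \<subseteq> ob X s) \<and>
                (\<forall>s s' fl x. smor s s' fl \<longrightarrow> x \<in> A s' \<longrightarrow> act X s' fl x \<in> A s)}"

definition Union_sub :: "('d list \<Rightarrow> 'x set) set \<Rightarrow> 'd list \<Rightarrow> 'x set" where
  "Union_sub S = (\<lambda>s. \<Union>A\<in>S. A s)"

(* functors Sub(X)^op -> Sets: sections sec K A, restriction res K A B : sec K A -> sec K B for B \<le> A *)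
type_synonym ('d,'x,'k) psh =
  "(('d list \<Rightarrow> 'x set) \<Rightarrow> 'k set) \<times> (('d list \<Rightarrow> 'x set) \<Rightarrow> ('d list \<Rightarrow> 'x set) \<Rightarrow> 'k \<Rightarrow> 'k)"

definition sec :: "('d,'x,'k) psh \<Rightarrow> ('d list \<Rightarrow> 'x set) \<Rightarrow> 'k set" where "sec K = fst K"
definition res :: "('d,'x,'k) psh \<Rightarrow> ('d list \<Rightarrow> 'x set) \<Rightarrow> ('d list \<Rightarrow> 'x set) \<Rightarrow> 'k \<Rightarrow> 'k"
  where "res K = snd K"

definition is_psh :: "('d,'x) schema \<Rightarrow> ('d,'x,'k) psh \<Rightarrow> bool" where
  "is_psh X K \<longleftrightarrow>
     (\<forall>A\<in>subs X. \<forall>B\<in>subs X. B \<le> A \<longrightarrow> (\<forall>k\<in>sec K A. res K A B k \<in> sec K B)) \<and>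
     (\<forall>A\<in>subs X. \<forall>k\<in>sec K A. res K A A k = k) \<and>
     (\<forall>A\<in>subs X. \<forall>B\<in>subs X. \<forall>C\<in>subs X. C \<le> B \<longrightarrow> B \<le> A \<longrightarrow>
        (\<forall>k\<in>sec K A. res K B C (res K A B k) = res K A C k))"

(* Sheaf condition: for every diagram given by a downward closed family S of
   subschemas (a sieve, viewed as a full subposet of Sub(X)),
   K(colim S) -> lim (K restricted to S) is bijective. *)
definition is_sheaf :: "('d,'x) schema \<Rightarrow> ('d,'x,'k) psh \<Rightarrow> bool" where
  "is_sheaf X K \<longleftrightarrow> is_psh X K \<and>
     (\<forall>S. S \<subseteq> subs X \<longrightarrow> (\<forall>A\<in>S. \<forall>B\<in>subs X. B \<le> A \<longrightarrow> B \<in> S) \<longrightarrow>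
        bij_betw (\<lambda>k. \<lambda>A\<in>S. res K (Union_sub S) A k) (sec K (Union_sub S))
          {F \<in> extensional S. (\<forall>A\<in>S. F A \<in> sec K A) \<and>
                              (\<forall>A\<in>S. \<forall>B\<in>S. B \<le> A \<longrightarrow> res K A B (F A) = F B)})"

definition psh_nat :: "('d,'x) schema \<Rightarrow> ('d,'x,'k) psh \<Rightarrow> ('d,'x,'l) psh
                       \<Rightarrow> (('d list \<Rightarrow> 'x set) \<Rightarrow> 'k \<Rightarrow> 'l) \<Rightarrow> bool" where
  "psh_nat X K L \<alpha> \<longleftrightarrow>
     (\<forall>A\<in>subs X. \<forall>k\<in>sec K A. \<alpha> A k \<in> sec L A) \<and>
     (\<forall>A\<in>subs X. \<forall>B\<in>subs X. B \<le> A \<longrightarrow> (\<forall>k\<in>sec K A. \<alpha> B (res K A B k) = res L A B (\<alpha> A k)))"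

(* universal sheaf U_X(A) = Hom(A, Gamma^pi) (transformations taken extensional) *)
definition UX :: "('u \<Rightarrow> 'd) \<Rightarrow> ('d,'x) schema \<Rightarrow> ('d,'x,'d list \<Rightarrow> 'x \<Rightarrow> 'u list) psh" where
  "UX \<pi> X = (\<lambda>A. {h. nat_on X A (Gamma \<pi>) h \<and> (\<forall>s x. x \<notin> A s \<longrightarrow> h s x = undefined)},
             \<lambda>A B h. \<lambda>s x. if x \<in> B s then h s x else undefined)"

type_synonym ('d,'x,'k,'u) db =
  "('d,'x,'k) psh \<times> (('d list \<Rightarrow> 'x set) \<Rightarrow> 'k \<Rightarrow> ('d list \<Rightarrow> 'x \<Rightarrow> 'u list))"

definition is_db :: "('u \<Rightarrow> 'd) \<Rightarrow> ('d,'x) schema \<Rightarrow> ('d,'x,'k,'u) db \<Rightarrow> bool" where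
  "is_db \<pi> X D \<longleftrightarrow> is_sheaf X (fst D) \<and> psh_nat X (fst D) (UX \<pi> X) (snd D)"

definition dbhom :: "('d,'x) schema \<Rightarrow> ('d,'x,'k,'u) db \<Rightarrow> ('d,'x,'l,'u) db
                     \<Rightarrow> (('d list \<Rightarrow> 'x set) \<Rightarrow> 'k \<Rightarrow> 'l) set" where
  "dbhom X D D' = {\<alpha>. psh_nat X (fst D) (fst D') \<alpha> \<and>
      (\<forall>A\<in>subs X. \<forall>k\<in>sec (fst D) A. snd D' A (\<alpha> A k) = snd D A k) \<and>
      (\<forall>A k. \<not> (A \<in> subs X \<and> k \<in> sec (fst D) A) \<longrightarrow> \<alpha> A k = undefined)}"

definition dbcomp :: "('d,'x) schema \<Rightarrow> ('d,'x,'k) psh \<Rightarrow> (('d list \<Rightarrow> 'x set) \<Rightarrow> 'l \<Rightarrow> 'm)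
                      \<Rightarrow> (('d list \<Rightarrow> 'x set) \<Rightarrow> 'k \<Rightarrow> 'l) \<Rightarrow> (('d list \<Rightarrow> 'x set) \<Rightarrow> 'k \<Rightarrow> 'm)" where
  "dbcomp X K \<beta> \<alpha> = (\<lambda>A k. if A \<in> subs X \<and> k \<in> sec K A then \<beta> A (\<alpha> A k) else undefined)"

definition img :: "('d list \<Rightarrow> 'y \<Rightarrow> 'x) \<Rightarrow> ('d list \<Rightarrow> 'y set) \<Rightarrow> 'd list \<Rightarrow> 'x set" where
  "img f B = (\<lambda>s. f s ` B s)"

definition preim :: "('d,'y) schema \<Rightarrow> ('d list \<Rightarrow> 'y \<Rightarrow> 'x) \<Rightarrow> ('d list \<Rightarrow> 'x set) \<Rightarrow> 'd list \<Rightarrow> 'y set" where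
  "preim Y f A = (\<lambda>s. {y \<in> ob Y s. f s y \<in> A s})"

(* pullback f^*(X,K,tau) = (Y, f^*K, U_f o f^*tau) *)
definition pullback_db :: "('d list \<Rightarrow> 'y \<Rightarrow> 'x) \<Rightarrow> ('d,'x,'k,'u) db \<Rightarrow> ('d,'y,'k,'u) db" where
  "pullback_db f D =
     ((\<lambda>B. sec (fst D) (img f B), \<lambda>B B'. res (fst D) (img f B) (img f B')),
      \<lambda>B k. \<lambda>s y. if y \<in> B s then snd D (img f B) k s (f s y) else undefined)"

definition pullback_mor :: "('d,'y) schema \<Rightarrow> ('d list \<Rightarrow> 'y \<Rightarrow> 'x) \<Rightarrow> ('d,'x,'k) psh
      \<Rightarrow> (('d list \<Rightarrow> 'x set) \<Rightarrow> 'k \<Rightarrow> 'l) \<Rightarrow> (('d list \<Rightarrow> 'y set) \<Rightarrow> 'k \<Rightarrow> 'l)" where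
  "pullback_mor Y f K \<alpha> =
     (\<lambda>B k. if B \<in> subs Y \<and> k \<in> sec K (img f B) then \<alpha> (img f B) k else undefined)"

(* push-forward f_+(Y,L,rho) = (X, U_X \<times>_{f_* U_Y} f_* L, projection) *)
definition pushforward_db :: "('u \<Rightarrow> 'd) \<Rightarrow> ('d,'x) schema \<Rightarrow> ('d,'y) schema
      \<Rightarrow> ('d list \<Rightarrow> 'y \<Rightarrow> 'x) \<Rightarrow> ('d,'y,'l,'u) db \<Rightarrow> ('d,'x,('d list \<Rightarrow> 'x \<Rightarrow> 'u list) \<times> 'l,'u) db" where
  "pushforward_db \<pi> X Y f E =
     ((\<lambda>A. {(h,l). h \<in> sec (UX \<pi> X) A \<and> l \<in> sec (fst E) (preim Y f A) \<and>
                   snd E (preim Y f A) l =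
                     (\<lambda>s y. if y \<in> preim Y f A s then h s (f s y) else undefined)},
       \<lambda>A B p. (res (UX \<pi> X) A B (fst p), res (fst E) (preim Y f A) (preim Y f B) (snd p))),
      \<lambda>A p. fst p)"

definition pushforward_mor :: "('u \<Rightarrow> 'd) \<Rightarrow> ('d,'x) schema \<Rightarrow> ('d,'y) schema
      \<Rightarrow> ('d list \<Rightarrow> 'y \<Rightarrow> 'x) \<Rightarrow> ('d,'y,'l,'u) db
      \<Rightarrow> (('d list \<Rightarrow> 'y set) \<Rightarrow> 'l \<Rightarrow> 'm)
      \<Rightarrow> (('d list \<Rightarrow> 'x set) \<Rightarrow> ('d list \<Rightarrow> 'x \<Rightarrow> 'u list) \<times> 'l \<Rightarrow> ('d list \<Rightarrow> 'x \<Rightarrow> 'u list) \<times> 'm)" where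
  "pushforward_mor \<pi> X Y f E \<beta> =
     (\<lambda>A p. if A \<in> subs X \<and> p \<in> sec (fst (pushforward_db \<pi> X Y f E)) A
            then (fst p, \<beta> (preim Y f A) (snd p)) else undefined)"

end

theory Submission
  imports Defs
begin

text \<open>
  The sections of \<open>f\<^sub>+E\<close> form the fibre product \<open>U\<^sub>X \<times>\<^bsub>f\<^sub>*U\<^sub>Y\<^esub> f\<^sub>*E\<close>; since
  direct images and fibre products of sheaves are sheaves, \<open>f\<^sub>+\<close> lands in databases on \<open>X\<close>.
  A morphism \<open>\<alpha> : f\<^sup>*D \<rightarrow> E\<close> transposes to \<open>D \<rightarrow> f\<^sub>+E\<close>, sending a section \<open>k\<close> over \<open>A\<close>
  to \<open>(\<tau>\<^sub>D k, \<alpha> (k|\<^bsub>f(f\<^sup>-\<^sup>1A)\<^esub>))\<close>; conversely \<open>\<beta> : D \<rightarrow> f\<^sub>+E\<close> gives back the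
  restriction to \<open>B\<close> of the second component of \<open>\<beta>\<close> over \<open>f(B)\<close>. The two constructions are
  mutually inverse and natural because image and preimage form a Galois connection,
  \<open>f(f\<^sup>-\<^sup>1A) \<le> A\<close> and \<open>B \<le> f\<^sup>-\<^sup>1(f B)\<close>, with \<open>f\<^sup>-\<^sup>1 \<circ> f \<circ> f\<^sup>-\<^sup>1 = f\<^sup>-\<^sup>1\<close> and \<open>f \<circ> f\<^sup>-\<^sup>1 \<circ> f = f\<close>.
\<close>

section \<open>Subschemas, sieves and sheaves\<close>

lemma subs_subset_ob: "A \<in> subs X \<Longrightarrow> A s \<subseteq> ob X s"
  by (auto simp: subs_def)

lemma subs_act_closed: "A \<in> subs X \<Longrightarrow> smor s s' fl \<Longrightarrow> x \<in> A s' \<Longrightarrow> act X s' fl x \<in> A s"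
  by (auto simp: subs_def)

lemma mem_Union_sub: "x \<in> Union_sub S s \<longleftrightarrow> (\<exists>A\<in>S. x \<in> A s)"
  by (simp add: Union_sub_def)

lemma Union_sub_in_subs:
  assumes "S \<subseteq> subs X" shows "Union_sub S \<in> subs X"
  unfolding subs_def [of X] mem_Collect_eq
proof (intro conjI allI impI subsetI)
  fix s x assume "x \<in> Union_sub S s"
  then show "x \<in> ob X s" using assms by (auto simp: mem_Union_sub dest: subs_subset_ob)
next
  fix s s' fl x assume "smor s s' fl" "x \<in> Union_sub S s'"
  then show "act X s' fl x \<in> Union_sub S s" using assms by (auto simp: mem_Union_sub dest: subs_act_closed)
qed

lemma Union_sub_upper: "A \<in> S \<Longrightarrow> A \<le> Union_sub S"
  by (auto simp: le_fun_def mem_Union_sub)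

lemma inf_in_subs: "A \<in> subs X \<Longrightarrow> B \<in> subs X \<Longrightarrow> inf A B \<in> subs X"
  by (auto simp: subs_def)

definition sieve :: "('d,'x) schema \<Rightarrow> ('d list \<Rightarrow> 'x set) set \<Rightarrow> bool" where
  "sieve X S \<longleftrightarrow> S \<subseteq> subs X \<and> (\<forall>A\<in>S. \<forall>B\<in>subs X. B \<le> A \<longrightarrow> B \<in> S)"

lemma sieve_subs: "sieve X S \<Longrightarrow> A \<in> S \<Longrightarrow> A \<in> subs X"
  by (auto simp: sieve_def)

lemma sieve_inf_closed: "sieve X S \<Longrightarrow> A \<in> S \<Longrightarrow> B \<in> S \<Longrightarrow> inf A B \<in> S"
  unfolding sieve_def by (meson inf_in_subs inf_le1 subsetD)

definition matching_families :: "('d,'x,'k) psh \<Rightarrow> ('d list \<Rightarrow> 'x set) set \<Rightarrow> (('d list \<Rightarrow> 'x set) \<Rightarrow> 'k) set" where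
  "matching_families K S = {F \<in> extensional S. (\<forall>A\<in>S. F A \<in> sec K A) \<and>
     (\<forall>A\<in>S. \<forall>B\<in>S. B \<le> A \<longrightarrow> res K A B (F A) = F B)}"

lemma matching_familiesD:
  assumes "F \<in> matching_families K S" "A \<in> S"
  shows "F A \<in> sec K A" and "B \<in> S \<Longrightarrow> B \<le> A \<Longrightarrow> res K A B (F A) = F B"
  using assms by (auto simp: matching_families_def)

lemma psh_res_closed:
  "is_psh X K \<Longrightarrow> A \<in> subs X \<Longrightarrow> B \<in> subs X \<Longrightarrow> B \<le> A \<Longrightarrow> k \<in> sec K A \<Longrightarrow> res K A B k \<in> sec K B"
  unfolding is_psh_def by meson

lemma psh_res_id: "is_psh X K \<Longrightarrow> A \<in> subs X \<Longrightarrow> k \<in> sec K A \<Longrightarrow> res K A A k = k"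
  unfolding is_psh_def by meson

lemma psh_res_trans:
  "is_psh X K \<Longrightarrow> A \<in> subs X \<Longrightarrow> B \<in> subs X \<Longrightarrow> C \<in> subs X \<Longrightarrow> C \<le> B \<Longrightarrow> B \<le> A \<Longrightarrow>
   k \<in> sec K A \<Longrightarrow> res K B C (res K A B k) = res K A C k"
  unfolding is_psh_def by meson

lemma psh_nat_closed: "psh_nat X K L \<alpha> \<Longrightarrow> A \<in> subs X \<Longrightarrow> k \<in> sec K A \<Longrightarrow> \<alpha> A k \<in> sec L A"
  unfolding psh_nat_def by meson

lemma psh_nat_res: "psh_nat X K L \<alpha> \<Longrightarrow> A \<in> subs X \<Longrightarrow> B \<in> subs X \<Longrightarrow> B \<le> A \<Longrightarrow>
   k \<in> sec K A \<Longrightarrow> \<alpha> B (res K A B k) = res L A B (\<alpha> A k)"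
  unfolding psh_nat_def by meson

lemma sheaf_is_psh: "is_sheaf X K \<Longrightarrow> is_psh X K"
  by (simp add: is_sheaf_def)

lemma sheaf_bij_betw_matching_families: "is_sheaf X K \<Longrightarrow> sieve X S \<Longrightarrow>
  bij_betw (\<lambda>k. \<lambda>A\<in>S. res K (Union_sub S) A k) (sec K (Union_sub S)) (matching_families K S)"
  unfolding is_sheaf_def sieve_def matching_families_def by (elim conjE) (drule spec[of _ S], simp)

lemma is_sheafI:
  assumes psh: "is_psh X K"
    and separated: "\<And>S k1 k2. sieve X S \<Longrightarrow> k1 \<in> sec K (Union_sub S) \<Longrightarrow> k2 \<in> sec K (Union_sub S) \<Longrightarrow>
      (\<And>A. A \<in> S \<Longrightarrow> res K (Union_sub S) A k1 = res K (Union_sub S) A k2) \<Longrightarrow> k1 = k2"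
    and glue: "\<And>S F. sieve X S \<Longrightarrow> F \<in> matching_families K S \<Longrightarrow>
      \<exists>k\<in>sec K (Union_sub S). \<forall>A\<in>S. res K (Union_sub S) A k = F A"
  shows "is_sheaf X K"
  unfolding is_sheaf_def matching_families_def[symmetric]
proof (intro conjI allI impI psh)
  fix S assume "S \<subseteq> subs X" "\<forall>A\<in>S. \<forall>B\<in>subs X. B \<le> A \<longrightarrow> B \<in> S"
  then have S: "sieve X S" by (simp add: sieve_def)
  let ?U = "Union_sub S" and ?r = "\<lambda>k. \<lambda>A\<in>S. res K (Union_sub S) A k"
  have U: "?U \<in> subs X" using S by (simp add: sieve_def Union_sub_in_subs)
  have "inj_on ?r (sec K ?U)"
  proof (rule inj_onI)
    fix k1 k2 assume k: "k1 \<in> sec K ?U" "k2 \<in> sec K ?U" and eq: "?r k1 = ?r k2"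
    have "res K ?U A k1 = res K ?U A k2" if "A \<in> S" for A
      using fun_cong[OF eq, of A] that by simp
    then show "k1 = k2" by (rule separated[OF S k])
  qed
  moreover have "?r k \<in> matching_families K S" if k: "k \<in> sec K ?U" for k
    unfolding matching_families_def mem_Collect_eq
  proof (intro conjI ballI impI)
    fix A B assume A: "A \<in> S" and B: "B \<in> S" and "B \<le> A"
    show "res K A B (?r k A) = ?r k B"
      using psh_res_trans[OF psh U sieve_subs[OF S A] sieve_subs[OF S B] \<open>B \<le> A\<close> Union_sub_upper[OF A] k] A B
      by simp
  qed (use k psh_res_closed[OF psh U _ Union_sub_upper k] sieve_subs[OF S] in auto)
  moreover have "F \<in> ?r ` sec K ?U" if F: "F \<in> matching_families K S" for F
  proof -
    obtain k where k: "k \<in> sec K ?U" "\<forall>A\<in>S. res K ?U A k = F A"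
      using glue[OF S F] by blast
    have "F = ?r k"
      using F k(2) by (auto simp: matching_families_def extensional_def)
    then show ?thesis using k(1) by blast
  qed
  ultimately show "bij_betw ?r (sec K ?U) (matching_families K S)"
    unfolding bij_betw_def by blast
qed

lemma sheaf_separated:
  assumes "is_sheaf X K" "sieve X S" "k1 \<in> sec K (Union_sub S)" "k2 \<in> sec K (Union_sub S)"
    and "\<And>A. A \<in> S \<Longrightarrow> res K (Union_sub S) A k1 = res K (Union_sub S) A k2"
  shows "k1 = k2"
proof -
  have "(\<lambda>A\<in>S. res K (Union_sub S) A k1) = (\<lambda>A\<in>S. res K (Union_sub S) A k2)"
    using assms(5) by (intro restrict_ext)
  then show ?thesis
    using sheaf_bij_betw_matching_families[OF assms(1,2)] assms(3,4) by (auto simp: bij_betw_def inj_on_def)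
qed

lemma sheaf_glue:
  assumes "is_sheaf X K" "sieve X S" "F \<in> matching_families K S"
  obtains k where "k \<in> sec K (Union_sub S)" "\<And>A. A \<in> S \<Longrightarrow> res K (Union_sub S) A k = F A"
proof -
  obtain k where "k \<in> sec K (Union_sub S)" "F = (\<lambda>A\<in>S. res K (Union_sub S) A k)"
    using sheaf_bij_betw_matching_families[OF assms(1,2)] assms(3) by (auto simp: bij_betw_def)
  then show ?thesis using that by simp
qed

section \<open>The universal sheaf\<close>

lemma sec_UX: "sec (UX \<pi> X) A = {h. nat_on X A (Gamma \<pi>) h \<and> (\<forall>s x. x \<notin> A s \<longrightarrow> h s x = undefined)}"
  by (simp add: sec_def UX_def)

lemma res_UX: "res (UX \<pi> X) A B h = (\<lambda>s x. if x \<in> B s then h s x else undefined)"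
  by (simp add: res_def UX_def)

lemma UX_is_psh: "is_psh X (UX \<pi> X)"
  unfolding is_psh_def
proof (intro conjI ballI impI)
  fix A B h assume B: "B \<in> subs X" and "B \<le> A" and h: "h \<in> sec (UX \<pi> X) A"
  then have "\<And>s x. x \<in> B s \<Longrightarrow> x \<in> A s" by (auto simp: le_fun_def)
  with h subs_act_closed[OF B] show "res (UX \<pi> X) A B h \<in> sec (UX \<pi> X) B"
    by (auto simp: sec_UX res_UX nat_on_def)
next
  fix A h assume "h \<in> sec (UX \<pi> X) A"
  then show "res (UX \<pi> X) A A h = h" by (auto simp: sec_UX res_UX intro!: ext)
next
  fix A B C h assume "A \<in> subs X" "B \<in> subs X" "C \<in> subs X" "C \<le> B"
  then show "res (UX \<pi> X) B C (res (UX \<pi> X) A B h) = res (UX \<pi> X) A C h"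
    by (fastforce simp: res_UX le_fun_def)
qed

lemma matching_family_UX_agree:
  assumes S: "sieve X S" and F: "F \<in> matching_families (UX \<pi> X) S"
    and A: "A \<in> S" "x \<in> A s" and A': "A' \<in> S" "x \<in> A' s"
  shows "F A s x = F A' s x"
proof -
  have I: "inf A A' \<in> S" by (rule sieve_inf_closed[OF S A(1) A'(1)])
  have "F A s x = res (UX \<pi> X) A (inf A A') (F A) s x" using A A' by (simp add: res_UX)
  also have "\<dots> = res (UX \<pi> X) A' (inf A A') (F A') s x"
    using matching_familiesD(2)[OF F A(1) I] matching_familiesD(2)[OF F A'(1) I] by simp
  also have "\<dots> = F A' s x" using A A' by (simp add: res_UX)
  finally show ?thesis .
qed

lemma UX_is_sheaf: "is_sheaf X (UX \<pi> X)"
proof (rule is_sheafI[OF UX_is_psh])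
  fix S k1 k2
  assume "k1 \<in> sec (UX \<pi> X) (Union_sub S)" "k2 \<in> sec (UX \<pi> X) (Union_sub S)"
    and eq: "\<And>A. A \<in> S \<Longrightarrow> res (UX \<pi> X) (Union_sub S) A k1 = res (UX \<pi> X) (Union_sub S) A k2"
  moreover have "k1 s x = k2 s x" if "A \<in> S" "x \<in> A s" for A s x
    using fun_cong[OF fun_cong[OF eq[OF that(1)], of s], of x] that(2) by (simp add: res_UX)
  ultimately show "k1 = k2"
    by (auto simp: sec_UX mem_Union_sub intro!: ext) metis
next
  fix S F assume S: "sieve X S" and F: "F \<in> matching_families (UX \<pi> X) S"
  let ?U = "Union_sub S"
  define h where "h s x = (if x \<in> ?U s then F (SOME A. A \<in> S \<and> x \<in> A s) s x else undefined)" for s x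
  have h_eq: "h s x = F A s x" if A: "A \<in> S" "x \<in> A s" for A s x
  proof -
    have "\<exists>A. A \<in> S \<and> x \<in> A s" using A by blast
    then have "F (SOME A. A \<in> S \<and> x \<in> A s) s x = F A s x"
      by (rule someI2_ex) (use matching_family_UX_agree[OF S F _ _ A] in blast)
    then show ?thesis using A by (auto simp: h_def mem_Union_sub)
  qed
  have "h \<in> sec (UX \<pi> X) ?U"
    unfolding sec_UX mem_Collect_eq nat_on_def
  proof (intro conjI allI impI)
    fix s x assume "x \<in> ?U s"
    then obtain A where "A \<in> S" "x \<in> A s" by (auto simp: mem_Union_sub)
    then show "h s x \<in> ob (Gamma \<pi>) s"
      using h_eq matching_familiesD(1)[OF F] by (auto simp: sec_UX nat_on_def)
  next
    fix s s' fl x assume sm: "smor s s' fl" and "x \<in> ?U s'"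
    then obtain A where A: "A \<in> S" "x \<in> A s'" by (auto simp: mem_Union_sub)
    have "act X s' fl x \<in> A s" by (rule subs_act_closed[OF sieve_subs[OF S A(1)] sm A(2)])
    then show "h s (act X s' fl x) = act (Gamma \<pi>) s' fl (h s' x)"
      using h_eq A matching_familiesD(1)[OF F A(1)] sm by (auto simp: sec_UX nat_on_def)
  qed (simp add: h_def)
  moreover have "res (UX \<pi> X) ?U A h = F A" if A: "A \<in> S" for A
    using h_eq[OF A] matching_familiesD(1)[OF F A] by (auto simp: res_UX sec_UX intro!: ext)
  ultimately show "\<exists>k\<in>sec (UX \<pi> X) ?U. \<forall>A\<in>S. res (UX \<pi> X) ?U A k = F A" by blast
qed

section \<open>Fibre products of sheaves\<close>

definition fibre_product :: "('d,'x,'a) psh \<Rightarrow> ('d,'x,'b) psh \<Rightarrow> (('d list \<Rightarrow> 'x set) \<Rightarrow> 'a \<Rightarrow> 'm)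
    \<Rightarrow> (('d list \<Rightarrow> 'x set) \<Rightarrow> 'b \<Rightarrow> 'm) \<Rightarrow> ('d,'x,'a \<times> 'b) psh" where
  "fibre_product K1 K2 g1 g2 =
     (\<lambda>A. {(a, b). a \<in> sec K1 A \<and> b \<in> sec K2 A \<and> g1 A a = g2 A b},
      \<lambda>A B p. (res K1 A B (fst p), res K2 A B (snd p)))"

lemma sec_fibre_product:
  "p \<in> sec (fibre_product K1 K2 g1 g2) A \<longleftrightarrow>
     fst p \<in> sec K1 A \<and> snd p \<in> sec K2 A \<and> g1 A (fst p) = g2 A (snd p)"
  by (simp add: fibre_product_def sec_def case_prod_beta)

lemma res_fibre_product:
  "res (fibre_product K1 K2 g1 g2) A B p = (res K1 A B (fst p), res K2 A B (snd p))"
  by (simp add: fibre_product_def res_def)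

context
  fixes X :: "('d,'x) schema" and K1 :: "('d,'x,'a) psh" and K2 :: "('d,'x,'b) psh"
    and M :: "('d,'x,'m) psh" and g1 g2
  assumes K1: "is_sheaf X K1" and K2: "is_sheaf X K2" and M: "is_sheaf X M"
    and g1: "psh_nat X K1 M g1" and g2: "psh_nat X K2 M g2"
begin

lemma fibre_product_is_psh: "is_psh X (fibre_product K1 K2 g1 g2)"
  unfolding is_psh_def
proof (intro conjI ballI impI)
  fix A B p assume A: "A \<in> subs X" and B: "B \<in> subs X" and "B \<le> A"
    and p: "p \<in> sec (fibre_product K1 K2 g1 g2) A"
  then show "res (fibre_product K1 K2 g1 g2) A B p \<in> sec (fibre_product K1 K2 g1 g2) B"
    using psh_res_closed[OF sheaf_is_psh[OF K1] A B] psh_res_closed[OF sheaf_is_psh[OF K2] A B]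
      psh_nat_res[OF g1 A B] psh_nat_res[OF g2 A B]
    by (simp add: sec_fibre_product res_fibre_product)
next
  fix A p assume "A \<in> subs X" "p \<in> sec (fibre_product K1 K2 g1 g2) A"
  then show "res (fibre_product K1 K2 g1 g2) A A p = p"
    using psh_res_id[OF sheaf_is_psh[OF K1]] psh_res_id[OF sheaf_is_psh[OF K2]]
    by (simp add: sec_fibre_product res_fibre_product)
next
  fix A B C p assume "A \<in> subs X" "B \<in> subs X" "C \<in> subs X" "C \<le> B" "B \<le> A"
    "p \<in> sec (fibre_product K1 K2 g1 g2) A"
  then show "res (fibre_product K1 K2 g1 g2) B C (res (fibre_product K1 K2 g1 g2) A B p) =
             res (fibre_product K1 K2 g1 g2) A C p"
    using psh_res_trans[OF sheaf_is_psh[OF K1]] psh_res_trans[OF sheaf_is_psh[OF K2]]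
    by (simp add: sec_fibre_product res_fibre_product)
qed

lemma fibre_product_is_sheaf: "is_sheaf X (fibre_product K1 K2 g1 g2)"
proof (rule is_sheafI[OF fibre_product_is_psh])
  fix S p q assume S: "sieve X S"
    and "p \<in> sec (fibre_product K1 K2 g1 g2) (Union_sub S)" "q \<in> sec (fibre_product K1 K2 g1 g2) (Union_sub S)"
    and "\<And>A. A \<in> S \<Longrightarrow> res (fibre_product K1 K2 g1 g2) (Union_sub S) A p = res (fibre_product K1 K2 g1 g2) (Union_sub S) A q"
  then show "p = q"
    using sheaf_separated[OF K1 S, of "fst p" "fst q"] sheaf_separated[OF K2 S, of "snd p" "snd q"]
    by (simp add: sec_fibre_product res_fibre_product prod_eq_iff)
next
  fix S F assume S: "sieve X S" and F: "F \<in> matching_families (fibre_product K1 K2 g1 g2) S"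
  let ?U = "Union_sub S"
  have U: "?U \<in> subs X" using S by (simp add: sieve_def Union_sub_in_subs)
  have "res K1 A B (fst (F A)) = fst (F B) \<and> res K2 A B (snd (F A)) = snd (F B)"
    if "A \<in> S" "B \<in> S" "B \<le> A" for A B
    using matching_familiesD(2)[OF F that] by (metis fst_conv snd_conv res_fibre_product)
  then have F1: "(\<lambda>A\<in>S. fst (F A)) \<in> matching_families K1 S"
    and F2: "(\<lambda>A\<in>S. snd (F A)) \<in> matching_families K2 S"
    using matching_familiesD(1)[OF F] by (auto simp: matching_families_def sec_fibre_product)
  obtain a where a: "a \<in> sec K1 ?U" "\<And>A. A \<in> S \<Longrightarrow> res K1 ?U A a = fst (F A)"
    using sheaf_glue[OF K1 S F1] by auto
  obtain b where b: "b \<in> sec K2 ?U" "\<And>A. A \<in> S \<Longrightarrow> res K2 ?U A b = snd (F A)"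
    using sheaf_glue[OF K2 S F2] by auto
  have "g1 ?U a = g2 ?U b"
  proof (rule sheaf_separated[OF M S psh_nat_closed[OF g1 U a(1)] psh_nat_closed[OF g2 U b(1)]])
    fix A assume A: "A \<in> S"
    have "res M ?U A (g1 ?U a) = g1 A (fst (F A))"
      using psh_nat_res[OF g1 U sieve_subs[OF S A] Union_sub_upper[OF A] a(1)] a(2)[OF A] by simp
    also have "\<dots> = g2 A (snd (F A))"
      using matching_familiesD(1)[OF F A] by (simp add: sec_fibre_product)
    also have "\<dots> = res M ?U A (g2 ?U b)"
      using psh_nat_res[OF g2 U sieve_subs[OF S A] Union_sub_upper[OF A] b(1)] b(2)[OF A] by simp
    finally show "res M ?U A (g1 ?U a) = res M ?U A (g2 ?U b)" .
  qed
  then have "(a, b) \<in> sec (fibre_product K1 K2 g1 g2) ?U"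
    using a(1) b(1) by (simp add: sec_fibre_product)
  moreover have "\<forall>A\<in>S. res (fibre_product K1 K2 g1 g2) ?U A (a, b) = F A"
    using a(2) b(2) by (simp add: res_fibre_product)
  ultimately show "\<exists>p\<in>sec (fibre_product K1 K2 g1 g2) ?U. \<forall>A\<in>S. res (fibre_product K1 K2 g1 g2) ?U A p = F A"
    by blast
qed

end

lemma psh_nat_fibre_product_fst: "psh_nat X (fibre_product K1 K2 g1 g2) K1 (\<lambda>A. fst)"
  by (simp add: psh_nat_def sec_fibre_product res_fibre_product)

section \<open>Direct images along a schema morphism\<close>

lemma preim_mono: "B \<le> A \<Longrightarrow> preim Y f B \<le> preim Y f A"
  by (auto simp: preim_def le_fun_def)

lemma preim_inf: "preim Y f (inf A B) = inf (preim Y f A) (preim Y f B)"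
  by (auto simp: preim_def)

lemma img_mono: "B \<le> A \<Longrightarrow> img f B \<le> img f A"
  by (auto simp: img_def le_fun_def)

lemma img_preim_le: "img f (preim Y f A) \<le> A"
  by (auto simp: img_def preim_def le_fun_def)

lemma le_preim_img: "B \<in> subs Y \<Longrightarrow> B \<le> preim Y f (img f B)"
  by (auto simp: img_def preim_def le_fun_def subs_def)

lemma preim_img_preim: "preim Y f (img f (preim Y f A)) = preim Y f A"
  by (auto simp: img_def preim_def)

lemma img_preim_img: "B \<in> subs Y \<Longrightarrow> img f (preim Y f (img f B)) = img f B"
  by (auto simp: img_def preim_def subs_def)

definition pullback_sieve :: "('d,'y) schema \<Rightarrow> ('d list \<Rightarrow> 'y \<Rightarrow> 'x) \<Rightarrow> ('d list \<Rightarrow> 'x set) set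
    \<Rightarrow> ('d list \<Rightarrow> 'y set) set" where
  "pullback_sieve Y f S = {B \<in> subs Y. \<exists>A\<in>S. B \<le> preim Y f A}"

lemma sieve_pullback_sieve: "sieve X S \<Longrightarrow> sieve Y (pullback_sieve Y f S)"
  unfolding sieve_def pullback_sieve_def by (auto intro: order_trans)

definition direct_image :: "('d,'y) schema \<Rightarrow> ('d list \<Rightarrow> 'y \<Rightarrow> 'x) \<Rightarrow> ('d,'y,'k) psh \<Rightarrow> ('d,'x,'k) psh" where
  "direct_image Y f L = (\<lambda>A. sec L (preim Y f A), \<lambda>A B. res L (preim Y f A) (preim Y f B))"

lemma sec_direct_image [simp]: "sec (direct_image Y f L) A = sec L (preim Y f A)"
  by (simp add: direct_image_def sec_def)

lemma res_direct_image [simp]: "res (direct_image Y f L) A B = res L (preim Y f A) (preim Y f B)"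
  by (simp add: direct_image_def res_def)

definition precomp :: "('d,'y) schema \<Rightarrow> ('d list \<Rightarrow> 'y \<Rightarrow> 'x) \<Rightarrow> ('d list \<Rightarrow> 'x set)
    \<Rightarrow> ('d list \<Rightarrow> 'x \<Rightarrow> 'u list) \<Rightarrow> 'd list \<Rightarrow> 'y \<Rightarrow> 'u list" where
  "precomp Y f A h = (\<lambda>s y. if y \<in> preim Y f A s then h s (f s y) else undefined)"

locale schema_morphism =
  fixes Y :: "('d,'y) schema" and X :: "('d,'x) schema" and f :: "'d list \<Rightarrow> 'y \<Rightarrow> 'x"
  assumes schema_Y: "is_schema Y" and hom: "schema_hom Y X f"
begin

lemma f_ob: "y \<in> ob Y s \<Longrightarrow> f s y \<in> ob X s"
  using hom unfolding schema_hom_def nat_on_def by blast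

lemma f_act: "smor s s' fl \<Longrightarrow> y \<in> ob Y s' \<Longrightarrow> f s (act Y s' fl y) = act X s' fl (f s' y)"
  using hom unfolding schema_hom_def nat_on_def by blast

lemma act_Y_closed: "smor s s' fl \<Longrightarrow> y \<in> ob Y s' \<Longrightarrow> act Y s' fl y \<in> ob Y s"
  using schema_Y unfolding is_schema_def by blast

lemma preim_in_subs: "A \<in> subs X \<Longrightarrow> preim Y f A \<in> subs Y"
  unfolding subs_def preim_def by (auto simp: act_Y_closed f_act)

lemma img_in_subs:
  assumes B: "B \<in> subs Y" shows "img f B \<in> subs X"
  unfolding subs_def img_def mem_Collect_eq
proof (intro conjI allI impI)
  fix s show "f s ` B s \<subseteq> ob X s" using subs_subset_ob[OF B] f_ob by blast
next
  fix s s' fl x assume sm: "smor s s' fl" and "x \<in> f s' ` B s'"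
  then obtain y where y: "y \<in> B s'" "x = f s' y" by blast
  then have "act X s' fl x = f s (act Y s' fl y)"
    using f_act[OF sm subsetD[OF subs_subset_ob[OF B] y(1)]] y(2) by simp
  then show "act X s' fl x \<in> f s ` B s" using subs_act_closed[OF B sm y(1)] by blast
qed

lemma Union_pullback_sieve:
  assumes "S \<subseteq> subs X" shows "Union_sub (pullback_sieve Y f S) = preim Y f (Union_sub S)"
proof (intro ext set_eqI iffI)
  fix s y assume "y \<in> Union_sub (pullback_sieve Y f S) s"
  then show "y \<in> preim Y f (Union_sub S) s"
    by (auto simp: mem_Union_sub pullback_sieve_def preim_def le_fun_def)
next
  fix s y assume "y \<in> preim Y f (Union_sub S) s"
  then obtain A where "A \<in> S" "y \<in> preim Y f A s" by (auto simp: preim_def mem_Union_sub)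
  then show "y \<in> Union_sub (pullback_sieve Y f S) s"
    using assms preim_in_subs by (auto simp: mem_Union_sub pullback_sieve_def)
qed

lemma direct_image_is_psh:
  assumes L: "is_psh Y L" shows "is_psh X (direct_image Y f L)"
  unfolding is_psh_def
  by (simp add: psh_res_closed[OF L] psh_res_id[OF L] psh_res_trans[OF L] preim_in_subs preim_mono)

lemma psh_nat_direct_image:
  "psh_nat Y L M \<alpha> \<Longrightarrow> psh_nat X (direct_image Y f L) (direct_image Y f M) (\<lambda>A. \<alpha> (preim Y f A))"
  unfolding psh_nat_def by (simp add: preim_in_subs preim_mono)

lemma matching_family_direct_image_agree:
  assumes L: "is_psh Y L" and S: "sieve X S" and F: "F \<in> matching_families (direct_image Y f L) S"
    and C: "C \<in> subs Y" and A: "A \<in> S" "C \<le> preim Y f A" and A': "A' \<in> S" "C \<le> preim Y f A'"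
  shows "res L (preim Y f A) C (F A) = res L (preim Y f A') C (F A')"
proof -
  let ?I = "inf A A'"
  have I: "?I \<in> S" by (rule sieve_inf_closed[OF S A(1) A'(1)])
  have CI: "C \<le> preim Y f ?I" using A(2) A'(2) by (simp add: preim_inf)
  have "res L (preim Y f B) C (F B) = res L (preim Y f ?I) C (F ?I)" if B: "B \<in> S" "?I \<le> B" for B
  proof -
    have "res L (preim Y f B) C (F B) = res L (preim Y f ?I) C (res L (preim Y f B) (preim Y f ?I) (F B))"
      using psh_res_trans[OF L preim_in_subs[OF sieve_subs[OF S B(1)]] preim_in_subs[OF sieve_subs[OF S I]]
          C CI preim_mono[OF B(2)]] matching_familiesD(1)[OF F B(1)]
      by simp
    also have "\<dots> = res L (preim Y f ?I) C (F ?I)"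
      using matching_familiesD(2)[OF F B(1) I B(2)] by simp
    finally show ?thesis .
  qed
  from this[OF A(1) inf_le1] this[OF A'(1) inf_le2] show ?thesis by simp
qed

lemma direct_image_separated:
  assumes L: "is_sheaf Y L" and S: "sieve X S"
    and l: "l1 \<in> sec L (preim Y f (Union_sub S))" "l2 \<in> sec L (preim Y f (Union_sub S))"
    and eq: "\<And>A. A \<in> S \<Longrightarrow>
      res L (preim Y f (Union_sub S)) (preim Y f A) l1 = res L (preim Y f (Union_sub S)) (preim Y f A) l2"
  shows "l1 = l2"
proof -
  let ?V = "preim Y f (Union_sub S)"
  have V: "Union_sub (pullback_sieve Y f S) = ?V"
    using S by (simp add: sieve_def Union_pullback_sieve)
  have V_subs: "?V \<in> subs Y" using S by (simp add: sieve_def Union_sub_in_subs preim_in_subs)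
  show "l1 = l2"
  proof (rule sheaf_separated[OF L sieve_pullback_sieve[OF S]])
    show "l1 \<in> sec L (Union_sub (pullback_sieve Y f S))" "l2 \<in> sec L (Union_sub (pullback_sieve Y f S))"
      using l V by simp_all
    fix B assume "B \<in> pullback_sieve Y f S"
    then obtain A where A: "A \<in> S" and BA: "B \<le> preim Y f A" and B: "B \<in> subs Y"
      by (auto simp: pullback_sieve_def)
    have "res L ?V B l = res L (preim Y f A) B (res L ?V (preim Y f A) l)" if "l \<in> sec L ?V" for l
      using psh_res_trans[OF sheaf_is_psh[OF L] V_subs preim_in_subs[OF sieve_subs[OF S A]] B BA
          preim_mono[OF Union_sub_upper[OF A]] that]
      by simp
    then show "res L (Union_sub (pullback_sieve Y f S)) B l1 = res L (Union_sub (pullback_sieve Y f S)) B l2"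
      using eq[OF A] l V by simp
  qed
qed

lemma direct_image_glue:
  assumes L: "is_sheaf Y L" and S: "sieve X S" and F: "F \<in> matching_families (direct_image Y f L) S"
  obtains l where "l \<in> sec L (preim Y f (Union_sub S))"
    and "\<And>A. A \<in> S \<Longrightarrow> res L (preim Y f (Union_sub S)) (preim Y f A) l = F A"
proof -
  let ?S' = "pullback_sieve Y f S" and ?V = "preim Y f (Union_sub S)"
  have V: "Union_sub ?S' = ?V" using S by (simp add: sieve_def Union_pullback_sieve)
  have L': "is_psh Y L" using L by (rule sheaf_is_psh)
  define G where "G = (\<lambda>B\<in>?S'. let A = SOME A. A \<in> S \<and> B \<le> preim Y f A in res L (preim Y f A) B (F A))"
  have G_eq: "G B = res L (preim Y f A) B (F A)" if B: "B \<in> ?S'" and A: "A \<in> S" "B \<le> preim Y f A" for A B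
  proof -
    let ?A = "SOME A. A \<in> S \<and> B \<le> preim Y f A"
    have "?A \<in> S \<and> B \<le> preim Y f ?A" by (rule someI[of _ A]) (use A in simp)
    moreover have "B \<in> subs Y" using B by (simp add: pullback_sieve_def)
    ultimately have "res L (preim Y f ?A) B (F ?A) = res L (preim Y f A) B (F A)"
      using matching_family_direct_image_agree[OF L' S F _ _ _ A] by blast
    then show ?thesis using B by (simp add: G_def Let_def)
  qed
  have "G \<in> matching_families L ?S'"
    unfolding matching_families_def mem_Collect_eq
  proof (intro conjI ballI impI)
    fix B assume B: "B \<in> ?S'"
    then obtain A where A: "A \<in> S" "B \<le> preim Y f A" and "B \<in> subs Y" by (auto simp: pullback_sieve_def)
    then show "G B \<in> sec L B"
      using G_eq[OF B A] psh_res_closed[OF L' preim_in_subs[OF sieve_subs[OF S A(1)]]] matching_familiesD(1)[OF F A(1)]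
      by simp
  next
    fix B C assume B: "B \<in> ?S'" and C: "C \<in> ?S'" and "C \<le> B"
    then obtain A where A: "A \<in> S" "B \<le> preim Y f A" and "B \<in> subs Y" "C \<in> subs Y"
      by (auto simp: pullback_sieve_def)
    moreover have "C \<le> preim Y f A" using \<open>C \<le> B\<close> A(2) by (rule order_trans)
    ultimately show "res L B C (G B) = G C"
      using G_eq[OF B A] G_eq[OF C A(1)] \<open>C \<le> B\<close> matching_familiesD(1)[OF F A(1)]
        psh_res_trans[OF L' preim_in_subs[OF sieve_subs[OF S A(1)]]]
      by simp
  qed (simp add: G_def)
  then obtain l where l: "l \<in> sec L ?V" and l_res: "\<And>B. B \<in> ?S' \<Longrightarrow> res L ?V B l = G B"
    using sheaf_glue[OF L sieve_pullback_sieve[OF S]] V by metis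
  have "res L ?V (preim Y f A) l = F A" if A: "A \<in> S" for A
  proof -
    have "preim Y f A \<in> ?S'"
      using preim_in_subs[OF sieve_subs[OF S A]] by (auto simp: pullback_sieve_def intro: A)
    then show ?thesis
      using l_res G_eq[OF _ A order_refl] psh_res_id[OF L' preim_in_subs[OF sieve_subs[OF S A]]]
        matching_familiesD(1)[OF F A]
      by simp
  qed
  with l show ?thesis using that by blast
qed

lemma direct_image_is_sheaf:
  assumes L: "is_sheaf Y L" shows "is_sheaf X (direct_image Y f L)"
proof (rule is_sheafI[OF direct_image_is_psh[OF sheaf_is_psh[OF L]]])
  fix S l1 l2 assume S: "sieve X S" and l: "l1 \<in> sec (direct_image Y f L) (Union_sub S)"
    "l2 \<in> sec (direct_image Y f L) (Union_sub S)"
    and eq: "\<And>A. A \<in> S \<Longrightarrow> res (direct_image Y f L) (Union_sub S) A l1 = res (direct_image Y f L) (Union_sub S) A l2"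
  have "\<And>A. A \<in> S \<Longrightarrow>
      res L (preim Y f (Union_sub S)) (preim Y f A) l1 = res L (preim Y f (Union_sub S)) (preim Y f A) l2"
    using eq by simp
  moreover have "l1 \<in> sec L (preim Y f (Union_sub S))" "l2 \<in> sec L (preim Y f (Union_sub S))"
    using l by simp_all
  ultimately show "l1 = l2" by (rule direct_image_separated[OF L S, rotated 2])
next
  fix S F assume "sieve X S" "F \<in> matching_families (direct_image Y f L) S"
  then show "\<exists>l\<in>sec (direct_image Y f L) (Union_sub S). \<forall>A\<in>S. res (direct_image Y f L) (Union_sub S) A l = F A"
    by (elim direct_image_glue[OF L]) auto
qed

lemma psh_nat_precomp: "psh_nat X (UX \<pi> X) (direct_image Y f (UX \<pi> Y)) (precomp Y f)"
  unfolding psh_nat_def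
proof (intro conjI ballI impI)
  fix A h assume "A \<in> subs X" "h \<in> sec (UX \<pi> X) A"
  then show "precomp Y f A h \<in> sec (direct_image Y f (UX \<pi> Y)) A"
    by (auto simp: sec_UX nat_on_def precomp_def preim_def f_act f_ob subs_act_closed act_Y_closed)
next
  fix A B h assume "A \<in> subs X" "B \<in> subs X" "B \<le> A"
  then have "\<And>s x. x \<in> B s \<Longrightarrow> x \<in> A s" by (auto simp: le_fun_def)
  then show "precomp Y f B (res (UX \<pi> X) A B h) = res (direct_image Y f (UX \<pi> Y)) A B (precomp Y f A h)"
    by (auto simp: res_UX precomp_def preim_def intro!: ext)
qed

end

section \<open>The adjunction between pullback and push-forward\<close>

lemma sec_pushforward_db:
  "p \<in> sec (fst (pushforward_db \<pi> X Y f E)) A \<longleftrightarrow>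
     fst p \<in> sec (UX \<pi> X) A \<and> snd p \<in> sec (fst E) (preim Y f A) \<and>
     snd E (preim Y f A) (snd p) = precomp Y f A (fst p)"
  by (simp add: pushforward_db_def sec_def precomp_def case_prod_beta)

lemma res_pushforward_db: "res (fst (pushforward_db \<pi> X Y f E)) A B p =
   (res (UX \<pi> X) A B (fst p), res (fst E) (preim Y f A) (preim Y f B) (snd p))"
  by (simp add: pushforward_db_def res_def)

lemma snd_pushforward_db: "snd (pushforward_db \<pi> X Y f E) = (\<lambda>A. fst)"
  by (simp add: pushforward_db_def)

lemma pushforward_db_eq_fibre_product: "fst (pushforward_db \<pi> X Y f E) =
   fibre_product (UX \<pi> X) (direct_image Y f (fst E)) (precomp Y f) (\<lambda>A. snd E (preim Y f A))"
  by (simp add: pushforward_db_def fibre_product_def direct_image_def precomp_def sec_def res_def eq_commute)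

lemma sec_pullback_db: "sec (fst (pullback_db f D)) B = sec (fst D) (img f B)"
  by (simp add: pullback_db_def sec_def)

lemma res_pullback_db: "res (fst (pullback_db f D)) B B' = res (fst D) (img f B) (img f B')"
  by (simp add: pullback_db_def res_def)

lemma snd_pullback_db:
  "snd (pullback_db f D) B k = (\<lambda>s y. if y \<in> B s then snd D (img f B) k s (f s y) else undefined)"
  by (simp add: pullback_db_def)

lemma db_is_psh: "is_db \<pi> X D \<Longrightarrow> is_psh X (fst D)"
  by (simp add: is_db_def is_sheaf_def)

lemma db_psh_nat: "is_db \<pi> X D \<Longrightarrow> psh_nat X (fst D) (UX \<pi> X) (snd D)"
  by (simp add: is_db_def)

lemma dbhom_psh_nat: "\<alpha> \<in> dbhom X D D' \<Longrightarrow> psh_nat X (fst D) (fst D') \<alpha>"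
  by (simp add: dbhom_def)

lemma dbhom_over: "\<alpha> \<in> dbhom X D D' \<Longrightarrow> A \<in> subs X \<Longrightarrow> k \<in> sec (fst D) A \<Longrightarrow> snd D' A (\<alpha> A k) = snd D A k"
  by (simp add: dbhom_def)

lemma dbhom_undefined: "\<alpha> \<in> dbhom X D D' \<Longrightarrow> \<not> (A \<in> subs X \<and> k \<in> sec (fst D) A) \<Longrightarrow> \<alpha> A k = undefined"
  by (simp add: dbhom_def)

lemma dbhom_pushforward_dbD:
  assumes "\<beta> \<in> dbhom X D (pushforward_db \<pi> X Y f E)" "A \<in> subs X" "k \<in> sec (fst D) A"
  shows "fst (\<beta> A k) = snd D A k" and "snd (\<beta> A k) \<in> sec (fst E) (preim Y f A)"
    and "snd E (preim Y f A) (snd (\<beta> A k)) = precomp Y f A (snd D A k)"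
  using dbhom_over[OF assms] psh_nat_closed[OF dbhom_psh_nat[OF assms(1)] assms(2,3)]
  by (simp_all add: snd_pushforward_db sec_pushforward_db)

context schema_morphism
begin

lemma pushforward_is_db:
  assumes E: "is_db \<pi> Y E" shows "is_db \<pi> X (pushforward_db \<pi> X Y f E)"
  unfolding is_db_def snd_pushforward_db pushforward_db_eq_fibre_product
  using fibre_product_is_sheaf[OF UX_is_sheaf direct_image_is_sheaf direct_image_is_sheaf[OF UX_is_sheaf]
      psh_nat_precomp psh_nat_direct_image[OF db_psh_nat[OF E]]] E
  by (simp add: is_db_def psh_nat_fibre_product_fst)

lemma img_preim_in_subs: "A \<in> subs X \<Longrightarrow> img f (preim Y f A) \<in> subs X"
  by (intro img_in_subs preim_in_subs)

definition transpose_db :: "('d,'x,'k,'u) db \<Rightarrow> (('d list \<Rightarrow> 'y set) \<Rightarrow> 'k \<Rightarrow> 'l)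
    \<Rightarrow> ('d list \<Rightarrow> 'x set) \<Rightarrow> 'k \<Rightarrow> ('d list \<Rightarrow> 'x \<Rightarrow> 'u list) \<times> 'l" where
  "transpose_db D \<alpha> = (\<lambda>A k. if A \<in> subs X \<and> k \<in> sec (fst D) A
      then (snd D A k, \<alpha> (preim Y f A) (res (fst D) A (img f (preim Y f A)) k)) else undefined)"

definition untranspose_db :: "('d,'x,'k,'u) db \<Rightarrow> ('d,'y,'l,'u) db
    \<Rightarrow> (('d list \<Rightarrow> 'x set) \<Rightarrow> 'k \<Rightarrow> ('d list \<Rightarrow> 'x \<Rightarrow> 'u list) \<times> 'l)
    \<Rightarrow> ('d list \<Rightarrow> 'y set) \<Rightarrow> 'k \<Rightarrow> 'l" where
  "untranspose_db D E \<beta> = (\<lambda>B k. if B \<in> subs Y \<and> k \<in> sec (fst D) (img f B)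
      then res (fst E) (preim Y f (img f B)) B (snd (\<beta> (img f B) k)) else undefined)"

lemma transpose_db_in_sec:
  assumes D: "is_db \<pi> X D" and \<alpha>: "\<alpha> \<in> dbhom Y (pullback_db f D) E"
    and A: "A \<in> subs X" and k: "k \<in> sec (fst D) A"
  shows "transpose_db D \<alpha> A k \<in> sec (fst (pushforward_db \<pi> X Y f E)) A"
proof -
  let ?A' = "img f (preim Y f A)"
  have k': "res (fst D) A ?A' k \<in> sec (fst (pullback_db f D)) (preim Y f A)"
    using psh_res_closed[OF db_is_psh[OF D] A img_preim_in_subs[OF A] img_preim_le k]
    by (simp add: sec_pullback_db)
  have "snd E (preim Y f A) (\<alpha> (preim Y f A) (res (fst D) A ?A' k))
      = snd (pullback_db f D) (preim Y f A) (res (fst D) A ?A' k)"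
    using dbhom_over[OF \<alpha> preim_in_subs[OF A] k'] .
  also have "\<dots> = precomp Y f A (snd D A k)"
    using psh_nat_res[OF db_psh_nat[OF D] A img_preim_in_subs[OF A] img_preim_le k]
    by (auto simp: snd_pullback_db res_UX precomp_def img_def intro!: ext)
  finally show ?thesis
    using psh_nat_closed[OF db_psh_nat[OF D] A k] psh_nat_closed[OF dbhom_psh_nat[OF \<alpha>] preim_in_subs[OF A] k'] A k
    by (simp add: transpose_db_def sec_pushforward_db)
qed

lemma transpose_db_in_dbhom:
  assumes D: "is_db \<pi> X D" and \<alpha>: "\<alpha> \<in> dbhom Y (pullback_db f D) E"
  shows "transpose_db D \<alpha> \<in> dbhom X D (pushforward_db \<pi> X Y f E)"
  unfolding dbhom_def mem_Collect_eq psh_nat_def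
proof (intro conjI ballI impI allI)
  fix A k assume "A \<in> subs X" "k \<in> sec (fst D) A"
  then show "transpose_db D \<alpha> A k \<in> sec (fst (pushforward_db \<pi> X Y f E)) A"
    by (rule transpose_db_in_sec[OF D \<alpha>])
next
  fix A B k assume A: "A \<in> subs X" and B: "B \<in> subs X" and BA: "B \<le> A" and k: "k \<in> sec (fst D) A"
  let ?A' = "img f (preim Y f A)" and ?B' = "img f (preim Y f B)"
  have B'A': "?B' \<le> ?A'" using BA by (intro img_mono preim_mono)
  have "res (fst D) B ?B' (res (fst D) A B k) = res (fst D) A ?B' k"
    using psh_res_trans[OF db_is_psh[OF D] A B img_preim_in_subs[OF B] img_preim_le BA k] .
  also have "\<dots> = res (fst D) ?A' ?B' (res (fst D) A ?A' k)"
    using psh_res_trans[OF db_is_psh[OF D] A img_preim_in_subs[OF A] img_preim_in_subs[OF B] B'A' img_preim_le k]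
    by simp
  finally have "\<alpha> (preim Y f B) (res (fst D) B ?B' (res (fst D) A B k))
      = res (fst E) (preim Y f A) (preim Y f B) (\<alpha> (preim Y f A) (res (fst D) A ?A' k))"
    using psh_nat_res[OF dbhom_psh_nat[OF \<alpha>] preim_in_subs[OF A] preim_in_subs[OF B] preim_mono[OF BA]]
      psh_res_closed[OF db_is_psh[OF D] A img_preim_in_subs[OF A] img_preim_le k]
    by (simp add: sec_pullback_db res_pullback_db)
  then show "transpose_db D \<alpha> B (res (fst D) A B k) = res (fst (pushforward_db \<pi> X Y f E)) A B (transpose_db D \<alpha> A k)"
    using A B k psh_res_closed[OF db_is_psh[OF D] A B BA k] psh_nat_res[OF db_psh_nat[OF D] A B BA k]
    by (simp add: transpose_db_def res_pushforward_db)
qed (auto simp: transpose_db_def snd_pushforward_db)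

lemma untranspose_db_in_dbhom:
  assumes D: "is_db \<pi> X D" and E: "is_db \<pi> Y E" and \<beta>: "\<beta> \<in> dbhom X D (pushforward_db \<pi> X Y f E)"
  shows "untranspose_db D E \<beta> \<in> dbhom Y (pullback_db f D) E"
  unfolding dbhom_def mem_Collect_eq psh_nat_def sec_pullback_db
proof (intro conjI ballI impI allI)
  fix B k assume B: "B \<in> subs Y" and k: "k \<in> sec (fst D) (img f B)"
  have "snd (\<beta> (img f B) k) \<in> sec (fst E) (preim Y f (img f B))"
    by (rule dbhom_pushforward_dbD(2)[OF \<beta> img_in_subs[OF B] k])
  then show "untranspose_db D E \<beta> B k \<in> sec (fst E) B"
    using psh_res_closed[OF db_is_psh[OF E] preim_in_subs[OF img_in_subs[OF B]] B le_preim_img[OF B]] B k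
    by (simp add: untranspose_db_def)
next
  fix B C k assume B: "B \<in> subs Y" and C: "C \<in> subs Y" and CB: "C \<le> B" and k: "k \<in> sec (fst D) (img f B)"
  let ?l = "snd (\<beta> (img f B) k)"
  have l: "?l \<in> sec (fst E) (preim Y f (img f B))"
    by (rule dbhom_pushforward_dbD(2)[OF \<beta> img_in_subs[OF B] k])
  have iCB: "img f C \<le> img f B" using CB by (rule img_mono)
  have kC: "res (fst D) (img f B) (img f C) k \<in> sec (fst D) (img f C)"
    using psh_res_closed[OF db_is_psh[OF D] img_in_subs[OF B] img_in_subs[OF C] iCB k] .
  have "untranspose_db D E \<beta> C (res (fst (pullback_db f D)) B C k)
      = res (fst E) (preim Y f (img f C)) C
          (res (fst E) (preim Y f (img f B)) (preim Y f (img f C)) ?l)"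
    using psh_nat_res[OF dbhom_psh_nat[OF \<beta>] img_in_subs[OF B] img_in_subs[OF C] iCB k] C kC
    by (simp add: untranspose_db_def res_pullback_db res_pushforward_db)
  also have "\<dots> = res (fst E) (preim Y f (img f B)) C ?l"
    using psh_res_trans[OF db_is_psh[OF E] preim_in_subs[OF img_in_subs[OF B]] preim_in_subs[OF img_in_subs[OF C]]
        C le_preim_img[OF C] preim_mono[OF iCB] l] .
  also have "\<dots> = res (fst E) B C (untranspose_db D E \<beta> B k)"
    using psh_res_trans[OF db_is_psh[OF E] preim_in_subs[OF img_in_subs[OF B]] B C CB le_preim_img[OF B] l] B k
    by (simp add: untranspose_db_def)
  finally show "untranspose_db D E \<beta> C (res (fst (pullback_db f D)) B C k) = res (fst E) B C (untranspose_db D E \<beta> B k)" .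
next
  fix B k assume B: "B \<in> subs Y" and k: "k \<in> sec (fst D) (img f B)"
  let ?B' = "preim Y f (img f B)"
  have "snd E B (untranspose_db D E \<beta> B k) = res (UX \<pi> Y) ?B' B (snd E ?B' (snd (\<beta> (img f B) k)))"
    using psh_nat_res[OF db_psh_nat[OF E] preim_in_subs[OF img_in_subs[OF B]] B le_preim_img[OF B]
        dbhom_pushforward_dbD(2)[OF \<beta> img_in_subs[OF B] k]] B k
    by (simp add: untranspose_db_def)
  also have "\<dots> = snd (pullback_db f D) B k"
  proof -
    have "\<And>s y. y \<in> B s \<Longrightarrow> y \<in> ?B' s" using le_preim_img[OF B, of f] by (auto simp: le_fun_def)
    then show ?thesis
      using dbhom_pushforward_dbD(3)[OF \<beta> img_in_subs[OF B] k]
      by (auto simp: res_UX precomp_def snd_pullback_db intro!: ext)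
  qed
  finally show "snd E B (untranspose_db D E \<beta> B k) = snd (pullback_db f D) B k" .
qed (auto simp: untranspose_db_def)

lemma untranspose_db_transpose_db:
  assumes D: "is_db \<pi> X D" and \<alpha>: "\<alpha> \<in> dbhom Y (pullback_db f D) E"
  shows "untranspose_db D E (transpose_db D \<alpha>) = \<alpha>"
proof (intro ext)
  fix B k
  show "untranspose_db D E (transpose_db D \<alpha>) B k = \<alpha> B k"
  proof (cases "B \<in> subs Y \<and> k \<in> sec (fst D) (img f B)")
    case True
    then have B: "B \<in> subs Y" and k: "k \<in> sec (fst D) (img f B)" by auto
    have "untranspose_db D E (transpose_db D \<alpha>) B k
        = res (fst E) (preim Y f (img f B)) B (\<alpha> (preim Y f (img f B)) k)"
      using B k img_in_subs[OF B] psh_res_id[OF db_is_psh[OF D] img_in_subs[OF B] k]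
      by (simp add: untranspose_db_def transpose_db_def img_preim_img)
    also have "\<dots> = \<alpha> B (res (fst (pullback_db f D)) (preim Y f (img f B)) B k)"
      using psh_nat_res[OF dbhom_psh_nat[OF \<alpha>] preim_in_subs[OF img_in_subs[OF B]] B le_preim_img[OF B]] k
      by (simp add: sec_pullback_db img_preim_img[OF B])
    also have "\<dots> = \<alpha> B k"
      using psh_res_id[OF db_is_psh[OF D] img_in_subs[OF B] k] by (simp add: res_pullback_db img_preim_img[OF B])
    finally show ?thesis .
  next
    case False
    then show ?thesis
      using dbhom_undefined[OF \<alpha>, of B k] by (auto simp: untranspose_db_def sec_pullback_db)
  qed
qed

lemma transpose_db_untranspose_db:
  assumes D: "is_db \<pi> X D" and E: "is_db \<pi> Y E" and \<beta>: "\<beta> \<in> dbhom X D (pushforward_db \<pi> X Y f E)"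
  shows "transpose_db D (untranspose_db D E \<beta>) = \<beta>"
proof (intro ext)
  fix A k
  show "transpose_db D (untranspose_db D E \<beta>) A k = \<beta> A k"
  proof (cases "A \<in> subs X \<and> k \<in> sec (fst D) A")
    case True
    then have A: "A \<in> subs X" and k: "k \<in> sec (fst D) A" by auto
    let ?A' = "img f (preim Y f A)"
    have k': "res (fst D) A ?A' k \<in> sec (fst D) ?A'"
      using psh_res_closed[OF db_is_psh[OF D] A img_preim_in_subs[OF A] img_preim_le k] .
    have "snd (\<beta> ?A' (res (fst D) A ?A' k)) = res (fst E) (preim Y f A) (preim Y f A) (snd (\<beta> A k))"
      using psh_nat_res[OF dbhom_psh_nat[OF \<beta>] A img_preim_in_subs[OF A] img_preim_le k]
      by (simp add: res_pushforward_db preim_img_preim)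
    also have "\<dots> = snd (\<beta> A k)"
      using psh_res_id[OF db_is_psh[OF E] preim_in_subs[OF A] dbhom_pushforward_dbD(2)[OF \<beta> A k]] .
    finally have "untranspose_db D E \<beta> (preim Y f A) (res (fst D) A ?A' k) = snd (\<beta> A k)"
      using preim_in_subs[OF A] k' psh_res_id[OF db_is_psh[OF E] preim_in_subs[OF A] dbhom_pushforward_dbD(2)[OF \<beta> A k]]
      by (simp add: untranspose_db_def preim_img_preim)
    then show ?thesis
      using A k dbhom_pushforward_dbD(1)[OF \<beta> A k] by (simp add: transpose_db_def prod_eq_iff)
  next
    case False
    then show ?thesis using dbhom_undefined[OF \<beta>] by (auto simp: transpose_db_def)
  qed
qed

lemma transpose_db_natural:
  assumes D: "is_db \<pi> X D" and D': "is_db \<pi> X D'" and \<alpha>: "\<alpha> \<in> dbhom Y (pullback_db f D) E"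
    and a: "a \<in> dbhom X D' D"
  shows "transpose_db D' (dbcomp Y (fst (pullback_db f D')) b
            (dbcomp Y (fst (pullback_db f D')) \<alpha> (pullback_mor Y f (fst D') a)))
       = dbcomp X (fst D') (pushforward_mor \<pi> X Y f E b) (dbcomp X (fst D') (transpose_db D \<alpha>) a)"
proof (intro ext)
  fix A k
  show "transpose_db D' (dbcomp Y (fst (pullback_db f D')) b
            (dbcomp Y (fst (pullback_db f D')) \<alpha> (pullback_mor Y f (fst D') a))) A k
       = dbcomp X (fst D') (pushforward_mor \<pi> X Y f E b) (dbcomp X (fst D') (transpose_db D \<alpha>) a) A k"
  proof (cases "A \<in> subs X \<and> k \<in> sec (fst D') A")
    case True
    then have A: "A \<in> subs X" and k: "k \<in> sec (fst D') A" by auto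
    let ?A' = "img f (preim Y f A)"
    have ak: "a A k \<in> sec (fst D) A" using psh_nat_closed[OF dbhom_psh_nat[OF a] A k] .
    have "a ?A' (res (fst D') A ?A' k) = res (fst D) A ?A' (a A k)"
      using psh_nat_res[OF dbhom_psh_nat[OF a] A img_preim_in_subs[OF A] img_preim_le k] .
    moreover have "res (fst D') A ?A' k \<in> sec (fst D') ?A'"
      using psh_res_closed[OF db_is_psh[OF D'] A img_preim_in_subs[OF A] img_preim_le k] .
    ultimately show ?thesis
      using A k ak preim_in_subs[OF A] transpose_db_in_sec[OF D \<alpha> A ak] dbhom_over[OF a A k]
      by (simp add: transpose_db_def dbcomp_def pullback_mor_def pushforward_mor_def sec_pullback_db)
  next
    case False
    then show ?thesis by (auto simp: transpose_db_def dbcomp_def)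
  qed
qed

end

theorem proposition5p1p1:
  fixes \<pi> :: "'u \<Rightarrow> 'd" and X :: "('d,'x) schema" and Y :: "('d,'y) schema"
    and f :: "'d list \<Rightarrow> 'y \<Rightarrow> 'x"
  assumes "is_schema X" and "is_schema Y" and "schema_hom Y X f"
  shows "(\<forall>E :: ('d,'y,'l,'u) db. is_db \<pi> Y E \<longrightarrow> is_db \<pi> X (pushforward_db \<pi> X Y f E)) \<and>
    (\<exists>\<Phi>. (\<forall>(D :: ('d,'x,'k,'u) db) (E :: ('d,'y,'l,'u) db). is_db \<pi> X D \<longrightarrow> is_db \<pi> Y E \<longrightarrow>
            bij_betw (\<Phi> D E) (dbhom Y (pullback_db f D) E) (dbhom X D (pushforward_db \<pi> X Y f E))) \<and>
         (\<forall>D D' E E' a b \<alpha>. is_db \<pi> X D \<longrightarrow> is_db \<pi> X D' \<longrightarrow> is_db \<pi> Y E \<longrightarrow> is_db \<pi> Y E' \<longrightarrow>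
            a \<in> dbhom X D' D \<longrightarrow> b \<in> dbhom Y E E' \<longrightarrow> \<alpha> \<in> dbhom Y (pullback_db f D) E \<longrightarrow>
            \<Phi> D' E' (dbcomp Y (fst (pullback_db f D')) b
                        (dbcomp Y (fst (pullback_db f D')) \<alpha> (pullback_mor Y f (fst D') a)))
            = dbcomp X (fst D') (pushforward_mor \<pi> X Y f E b) (dbcomp X (fst D') (\<Phi> D E \<alpha>) a)))"
proof -
  interpret schema_morphism Y X f using assms(2,3) by unfold_locales
  have "bij_betw (transpose_db D) (dbhom Y (pullback_db f D) E) (dbhom X D (pushforward_db \<pi> X Y f E))"
    if "is_db \<pi> X D" "is_db \<pi> Y E" for D :: "('d,'x,'k,'u) db" and E :: "('d,'y,'l,'u) db"
    using untranspose_db_transpose_db[OF that(1), where E = E] transpose_db_untranspose_db[OF that]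
      transpose_db_in_dbhom[OF that(1), where E = E] untranspose_db_in_dbhom[OF that]
    by (intro bij_betw_byWitness[where f' = "untranspose_db D E"]) auto
  then show ?thesis
    using pushforward_is_db transpose_db_natural by (intro conjI exI[of _ "\<lambda>D E. transpose_db D"]) auto
qed

end
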